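(* For every formula $\varphi$ of propositional linear temporal logic, $\mathrm{LTL} \models \neg \Box (\varphi\leftrightarrow\bigcirc\diamondsuit\Box\neg\varphi)$.
   Context: Propositional linear temporal logic (LTL) with the "next" modality $\bigcirc$, "always" modality $\Box$ and $\diamondsuit\varphi\equiv\neg\Box\neg\varphi$, interpreted over infinite sequences of states $\mathcal{K}=(\eta_0,\eta_1,\dots)$ with $\mathcal{K}_i(\bigcirc\varphi)=\mathcal{K}_{i+1}(\varphi)$, $\mathcal{K}_i(\Box\varphi)=\mathfrak{tt}$ iff $\mathcal{K}_j(\varphi)=\mathfrak{tt}$ for all $j\ge i$. $\mathrm{LTL}\models\varphi$ means validity in all temporal structures. Here $\bigcirc$ denotes the LTL "next" operator. *)

theory Defs
  imports Main
begin

datatype 'v ltl =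
    Var 'v
  | FF
  | Imp "'v ltl" "'v ltl"
  | Next "'v ltl"
  | Always "'v ltl"

definition Neg :: "'v ltl \<Rightarrow> 'v ltl" where
  "Neg \<phi> = Imp \<phi> FF"

definition Conj :: "'v ltl \<Rightarrow> 'v ltl \<Rightarrow> 'v ltl" where
  "Conj \<phi> \<psi> = Neg (Imp \<phi> (Neg \<psi>))"

definition Iff :: "'v ltl \<Rightarrow> 'v ltl \<Rightarrow> 'v ltl" where
  "Iff \<phi> \<psi> = Conj (Imp \<phi> \<psi>) (Imp \<psi> \<phi>)"

definition Eventually :: "'v ltl \<Rightarrow> 'v ltl" where
  "Eventually \<phi> = Neg (Always (Neg \<phi>))"

text \<open>A temporal structure K = (eta_0, eta_1, ...) is a function from nat to
 states; a state assigns truth values to propositional variables.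
 holds K i phi means K_i(phi) = tt.\<close>

fun holds :: "(nat \<Rightarrow> 'v \<Rightarrow> bool) \<Rightarrow> nat \<Rightarrow> 'v ltl \<Rightarrow> bool" where
  "holds K i (Var v) = K i v"
| "holds K i FF = False"
| "holds K i (Imp \<phi> \<psi>) = (holds K i \<phi> \<longrightarrow> holds K i \<psi>)"
| "holds K i (Next \<phi>) = holds K (Suc i) \<phi>"
| "holds K i (Always \<phi>) = (\<forall>j\<ge>i. holds K j \<phi>)"

definition ltl_valid :: "'v ltl \<Rightarrow> bool" where
  "ltl_valid \<phi> = (\<forall>K i. holds K i \<phi>)"

end

theory Submission
  imports Defs
begin

text \<open>The right-hand side \<open>Next (Eventually (Always (Neg \<phi>)))\<close>, "\<phi> is false
 from some point on", does not depend on the position.  So if the equivalence held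
 everywhere from some point on, \<phi> would be constant there, equal to that property;
 but if \<phi> is constantly true the property fails, and if constantly false it holds.\<close>

lemma holds_Neg [simp]: "holds K i (Neg \<phi>) \<longleftrightarrow> \<not> holds K i \<phi>"
  by (simp add: Neg_def)

lemma holds_Conj [simp]: "holds K i (Conj \<phi> \<psi>) \<longleftrightarrow> holds K i \<phi> \<and> holds K i \<psi>"
  by (simp add: Conj_def)

lemma holds_Iff [simp]: "holds K i (Iff \<phi> \<psi>) \<longleftrightarrow> (holds K i \<phi> \<longleftrightarrow> holds K i \<psi>)"
  by (auto simp add: Iff_def)

lemma holds_Eventually [simp]: "holds K i (Eventually \<phi>) \<longleftrightarrow> (\<exists>j\<ge>i. holds K j \<phi>)"
  by (auto simp add: Eventually_def)

lemma eventually_never_from_iff: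
  fixes P :: "nat \<Rightarrow> bool"
  shows "(\<exists>k\<ge>j. \<forall>m\<ge>k. \<not> P m) \<longleftrightarrow> (\<exists>k. \<forall>m\<ge>k. \<not> P m)"
  by (metis le_trans nat_le_linear)

lemma no_pred_equiv_eventually_never:
  fixes P :: "nat \<Rightarrow> bool"
  shows "\<not> (\<forall>j\<ge>i. P j \<longleftrightarrow> (\<exists>k\<ge>Suc j. \<forall>m\<ge>k. \<not> P m))"
proof
  assume equiv: "\<forall>j\<ge>i. P j \<longleftrightarrow> (\<exists>k\<ge>Suc j. \<forall>m\<ge>k. \<not> P m)"
  define E where "E \<longleftrightarrow> (\<exists>k. \<forall>m\<ge>k. \<not> P m)"
  have P_constant: "\<forall>j\<ge>i. P j \<longleftrightarrow> E"
    using equiv by (simp add: E_def eventually_never_from_iff)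
  show False
  proof (cases E)
    case True
    then obtain k where "\<forall>m\<ge>k. \<not> P m" by (auto simp: E_def)
    then show False using P_constant True by (metis max.cobounded1 max.cobounded2)
  next
    case False
    then have "\<forall>m\<ge>i. \<not> P m" using P_constant by blast
    then show False using False by (auto simp: E_def)
  qed
qed

theorem mainTheorem4:
  fixes \<phi> :: "'v ltl"
  shows "ltl_valid (Neg (Always (Iff \<phi> (Next (Eventually (Always (Neg \<phi>)))))))"
  unfolding ltl_valid_def
  using no_pred_equiv_eventually_never[where P = "\<lambda>m. holds K m \<phi>" for K]
  by simp

end
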